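(* Let $\mathcal E$ be a finite-dimensional Hilbert space and $T\in B(F^2(H_n)\otimes\mathcal E)$ a strictly positive (positive invertible) multi-Toeplitz operator. Then $e(T)=-\ln\det[P_{\mathcal E}T^{-1}|_{\mathcal E}]$.
   Context: Full Fock space $F^2(H_n)$ with basis $e_\alpha$, $\alpha\in\mathbb F_n^+$ (free semigroup on $g_1,\dots,g_n$, identity $g_0$, $e_{g_0}=1$); $S_i\psi=e_i\otimes\psi$. $T$ is multi-Toeplitz if $(S_i\otimes I)^*T(S_j\otimes I)=\delta_{ij}T$. $\mathcal E\equiv1\otimes\mathcal E$ with projection $P_{\mathcal E}$. $\mathcal P(\mathcal E)$ denotes polynomials $p=\sum_{|\alpha|\le m}e_\alpha\otimes h_\alpha$ with $p(0)=h_{g_0}$. $\Delta_T\in B(\mathcal E)$ is defined by $\langle\Delta_Tx,x\rangle=\inf\{\langle T(x-p),x-p\rangle:p\in\mathcal P(\mathcal E),p(0)=0\}$ and the prediction entropy is $e(T)=\ln\det\Delta_T$. *)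

theory Defs
  imports "HOL-Analysis.Analysis"
begin

text \<open>Model of the full Fock space tensored with a finite dimensional Hilbert space E.
  E is modelled as complex^'m (with its Euclidean complex inner product).
  The free semigroup on g_1..g_n is modelled by words (lists) over {0..<n}, the empty
  word being the identity g_0.
  The basis vector e_alpha (x) x is the function that is x at alpha and 0 elsewhere.\<close>

type_synonym 'm fock = "nat list \<Rightarrow> complex^('m::finite)"

definition words :: "nat \<Rightarrow> nat list set" where
  "words n = {w. set w \<subseteq> {..<n}}"

definition cinner :: "complex^('m::finite) \<Rightarrow> complex^'m \<Rightarrow> complex" where
  "cinner x y = (\<Sum>i\<in>UNIV. x $ i * cnj (y $ i))"

definition fockspace :: "nat \<Rightarrow> ('m::finite) fock set" where
  "fockspace n = {f. (\<forall>w. w \<notin> words n \<longrightarrow> f w = 0) \<and> (\<lambda>w. (norm (f w))\<^sup>2) summable_on UNIV}"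

definition fip :: "('m::finite) fock \<Rightarrow> ('m::finite) fock \<Rightarrow> complex" where
  "fip f g = (\<Sum>\<^sub>\<infinity>w. cinner (f w) (g w))"

definition fnorm :: "('m::finite) fock \<Rightarrow> real" where
  "fnorm f = sqrt (\<Sum>\<^sub>\<infinity>w. (norm (f w))\<^sup>2)"

text \<open>Bounded (complex) linear operator on F^2(H_n) (x) E; only values on the space matter.\<close>
definition bounded_op :: "nat \<Rightarrow> (('m::finite) fock \<Rightarrow> ('m::finite) fock) \<Rightarrow> bool" where
  "bounded_op n A \<longleftrightarrow>
     (\<forall>f\<in>fockspace n. A f \<in> fockspace n) \<and>
     (\<forall>f\<in>fockspace n. \<forall>g\<in>fockspace n. \<forall>c::complex.
        A (\<lambda>w. c *s f w + g w) = (\<lambda>w. c *s A f w + A g w)) \<and>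
     (\<exists>C. \<forall>f\<in>fockspace n. fnorm (A f) \<le> C * fnorm f)"

text \<open>The shift S_i (x) I : e_alpha (x) x \<mapsto> e_{g_i alpha} (x) x, and its adjoint.\<close>
definition shift :: "nat \<Rightarrow> ('m::finite) fock \<Rightarrow> ('m::finite) fock" where
  "shift i f = (\<lambda>w. case w of [] \<Rightarrow> 0 | j # v \<Rightarrow> (if j = i then f v else 0))"

definition shift_adj :: "nat \<Rightarrow> ('m::finite) fock \<Rightarrow> ('m::finite) fock" where
  "shift_adj i f = (\<lambda>w. f (i # w))"

definition multi_toeplitz :: "nat \<Rightarrow> (('m::finite) fock \<Rightarrow> ('m::finite) fock) \<Rightarrow> bool" where
  "multi_toeplitz n T \<longleftrightarrow> bounded_op n T \<and>
     (\<forall>i<n. \<forall>j<n. \<forall>f\<in>fockspace n.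
        shift_adj i (T (shift j f)) = (if i = j then T f else (\<lambda>w. 0)))"

definition positive_op :: "nat \<Rightarrow> (('m::finite) fock \<Rightarrow> ('m::finite) fock) \<Rightarrow> bool" where
  "positive_op n T \<longleftrightarrow> bounded_op n T \<and>
     (\<forall>f\<in>fockspace n. fip (T f) f \<in> \<real> \<and> 0 \<le> Re (fip (T f) f))"

definition emb :: "complex^('m::finite) \<Rightarrow> ('m::finite) fock" where
  "emb x = (\<lambda>w. if w = [] then x else 0)"

text \<open>Polynomials in P(E): finitely supported elements; p(0) is the value at the empty word.\<close>
definition polys :: "nat \<Rightarrow> ('m::finite) fock set" where
  "polys n = {p \<in> fockspace n. finite {w. p w \<noteq> 0}}"

definition pred_form :: "nat \<Rightarrow> (('m::finite) fock \<Rightarrow> ('m::finite) fock) \<Rightarrow> complex^'m \<Rightarrow> real" where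
  "pred_form n T x = Inf {Re (fip (T (\<lambda>w. emb x w - p w)) (\<lambda>w. emb x w - p w)) | p.
                            p \<in> polys n \<and> p [] = 0}"

definition Delta :: "nat \<Rightarrow> (('m::finite) fock \<Rightarrow> ('m::finite) fock) \<Rightarrow> complex^('m::finite)^'m" where
  "Delta n T = (THE D. \<forall>x. cinner (D *v x) x = complex_of_real (pred_form n T x))"

text \<open>Prediction entropy e(T) = ln det Delta_T (det of a positive matrix is real).\<close>
definition pred_entropy :: "nat \<Rightarrow> (('m::finite) fock \<Rightarrow> ('m::finite) fock) \<Rightarrow> real" where
  "pred_entropy n T = ln (Re (det (Delta n T)))"

definition compress :: "(('m::finite) fock \<Rightarrow> ('m::finite) fock) \<Rightarrow> complex^('m::finite)^'m" where
  "compress A = (\<chi> i j. (A (emb (axis j 1)) []) $ i)"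

end

theory Submission
  imports Defs
begin

text \<open>Let \<open>K\<close> be the compression of \<open>T\<^sup>-\<^sup>1\<close> to \<open>E\<close>. For \<open>x \<in> E\<close> put
  \<open>h = T\<^sup>-\<^sup>1 (K\<^sup>-\<^sup>1 x)\<close>; then \<open>h(0) = x\<close> and \<open>T h = K\<^sup>-\<^sup>1 x \<in> E\<close>, so \<open>h\<close> is
  \<open>T\<close>-orthogonal to every vector vanishing at the empty word. Hence for \<open>p(0) = 0\<close>,
  \<open>\<langle>T(x - p), x - p\<rangle> = \<langle>K\<^sup>-\<^sup>1 x, x\<rangle> + \<langle>T r, r\<rangle>\<close> with \<open>r = x - p - h\<close>. Positivity of
  \<open>T\<close> gives the lower bound \<open>\<langle>K\<^sup>-\<^sup>1 x, x\<rangle>\<close>, and since polynomials are dense and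
  \<open>T\<close> is bounded, \<open>r\<close> can be made arbitrarily small. Thus \<open>\<Delta>\<^sub>T = K\<^sup>-\<^sup>1\<close>, and
  \<open>det K\<close> is real because \<open>K\<close> is Hermitian. That \<open>K\<close> is invertible follows
  from positivity of \<open>T\<close> as well.\<close>

lemma norm_vec_power2: "(norm (x::complex^'m::finite))\<^sup>2 = (\<Sum>i\<in>UNIV. (cmod (x$i))\<^sup>2)"
  unfolding norm_vec_def L2_set_def by (simp add: sum_nonneg)

lemma norm_vec_scale: "norm (c *s (x::complex^'m::finite)) = cmod c * norm x"
proof -
  have "(norm (c *s x))\<^sup>2 = (cmod c * norm x)\<^sup>2"
    unfolding power_mult_distrib norm_vec_power2 by (simp add: norm_mult power_mult_distrib sum_distrib_left)
  then show ?thesis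
    by (rule power2_eq_imp_eq) simp_all
qed

lemma cinner_self: "cinner x x = complex_of_real ((norm x)\<^sup>2)"
  unfolding cinner_def norm_vec_power2 of_real_sum
  by (rule sum.cong) (simp_all add: complex_norm_square[symmetric])

lemma cinner_add_left: "cinner (x + y) z = cinner x z + cinner y z"
  unfolding cinner_def by (simp add: distrib_right sum.distrib)

lemma cinner_add_right: "cinner z (x + y) = cinner z x + cinner z y"
  unfolding cinner_def by (simp add: distrib_left sum.distrib)

lemma cinner_diff_left: "cinner (x - y) z = cinner x z - cinner y z"
  unfolding cinner_def by (simp add: left_diff_distrib sum_subtractf)

lemma cinner_scale_left: "cinner (c *s x) z = c * cinner x z"
  unfolding cinner_def by (simp add: mult.assoc flip: sum_distrib_left)

lemma cinner_scale_right: "cinner z (c *s x) = cnj c * cinner z x"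
  unfolding cinner_def by (simp add: sum_distrib_left algebra_simps)

lemma cinner_zero_left [simp]: "cinner 0 z = 0"
  unfolding cinner_def by simp

lemma cinner_zero_right [simp]: "cinner z 0 = 0"
  unfolding cinner_def by simp

lemma cinner_commute: "cinner y x = cnj (cinner x y)"
  unfolding cinner_def by (simp add: mult.commute)

lemma cinner_axis_right: "cinner x (axis i 1) = x $ i"
  unfolding cinner_def axis_def by (simp add: if_distrib cong: if_cong)

lemma cinner_axis_left: "cinner (axis i 1) x = cnj (x $ i)"
  by (metis cinner_axis_right cinner_commute)

lemma cinner_bound: "2 * cmod (cinner x y) \<le> (norm x)\<^sup>2 + (norm y)\<^sup>2"
proof -
  have "cmod (cinner x y) \<le> (\<Sum>i\<in>UNIV. cmod (x$i) * cmod (y$i))"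
    unfolding cinner_def by (rule order_trans[OF norm_sum]) (simp add: norm_mult)
  then have "2 * cmod (cinner x y) \<le> (\<Sum>i\<in>UNIV. 2 * cmod (x$i) * cmod (y$i))"
    by (simp add: mult.assoc flip: sum_distrib_left)
  also have "\<dots> \<le> (\<Sum>i\<in>UNIV. (cmod (x$i))\<^sup>2 + (cmod (y$i))\<^sup>2)"
    by (intro sum_mono sum_squares_bound)
  finally show ?thesis
    unfolding norm_vec_power2 by (simp add: sum.distrib)
qed

lemma matrix_vector_mult_axis: "((N::'a::comm_ring_1^'m::finite^'k) *v axis j 1) $ i = N $ i $ j"
  unfolding matrix_vector_mult_def axis_def by (simp add: if_distrib cong: if_cong)

lemma quadratic_form_zero_imp_matrix_zero:
  fixes N :: "complex^'m::finite^'m"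
  assumes "\<And>x. cinner (N *v x) x = 0"
  shows "N = 0"
proof -
  have polar: "cinner (N *v (axis j 1 + c *s axis k 1)) (axis j 1 + c *s axis k 1)
      = N$j$j + cnj c * N$k$j + c * N$j$k + c * cnj c * N$k$k" for j k c
    by (simp add: vector_scalar_commute cinner_add_left
        cinner_add_right cinner_scale_left cinner_scale_right cinner_axis_right
        matrix_vector_mult_axis algebra_simps)
  have diag: "N$j$j = 0" for j
    using assms[of "axis j 1"] by (simp add: cinner_axis_right matrix_vector_mult_axis)
  show ?thesis
    unfolding vec_eq_iff
  proof (intro allI)
    fix j k :: 'm
    have "N$k$j + N$j$k = 0" using polar[of j 1 k] assms diag by simp
    moreover have "- \<i> * N$k$j + \<i> * N$j$k = 0" using polar[of j \<i> k] assms diag by simp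
    ultimately show "N$j$k = 0$j$k" by (simp add: algebra_simps)
  qed
qed

lemma det_hermitian_real:
  fixes K :: "complex^'m::finite^'m"
  assumes "\<And>i j. K$i$j = cnj (K$j$i)"
  shows "det K \<in> \<real>"
proof -
  have "cnj (det K) = det (\<chi> i j. cnj (K$i$j))"
    unfolding det_def by simp
  also have "(\<chi> i j. cnj (K$i$j)) = transpose K"
  proof -
    have "cnj (K$i$j) = K$j$i" for i j
      using assms[of j i] by simp
    then show ?thesis by (simp add: vec_eq_iff transpose_def)
  qed
  finally show ?thesis
    unfolding Reals_cnj_iff det_transpose .
qed

lemma fockspaceD:
  assumes "f \<in> fockspace n"
  shows "(\<lambda>w. (norm (f w))\<^sup>2) summable_on UNIV" and "w \<notin> words n \<Longrightarrow> f w = 0"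
  using assms unfolding fockspace_def by auto

lemma zero_in_fockspace [simp]: "(\<lambda>w. 0) \<in> fockspace n"
  unfolding fockspace_def by simp

lemma emb_in_fockspace [simp]: "emb u \<in> fockspace n"
proof -
  have "(\<lambda>w. (norm (emb u w))\<^sup>2) summable_on UNIV"
    by (rule summable_on_cong_neutral[where S="{[]}", THEN iffD1]) (auto simp: emb_def)
  then show ?thesis
    unfolding fockspace_def by (auto simp: emb_def words_def)
qed

lemma fockspace_lincomb:
  assumes "f \<in> fockspace n" "g \<in> fockspace n"
  shows "(\<lambda>w. c *s f w + g w) \<in> fockspace n"
proof -
  have "(norm (c *s f w + g w))\<^sup>2 \<le> 2 * (cmod c)\<^sup>2 * (norm (f w))\<^sup>2 + 2 * (norm (g w))\<^sup>2" for w
  proof -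
    have "norm (c *s f w + g w) \<le> cmod c * norm (f w) + norm (g w)"
      using norm_triangle_ineq[of "c *s f w" "g w"] by (simp add: norm_vec_scale)
    then have "(norm (c *s f w + g w))\<^sup>2 \<le> (cmod c * norm (f w) + norm (g w))\<^sup>2"
      by (simp add: power_mono)
    with sum_squares_bound[of "cmod c * norm (f w)" "norm (g w)"] show ?thesis
      by (simp add: power2_sum power_mult_distrib)
  qed
  moreover have "(\<lambda>w. 2 * (cmod c)\<^sup>2 * (norm (f w))\<^sup>2 + 2 * (norm (g w))\<^sup>2) summable_on UNIV"
    using fockspaceD(1)[OF assms(1)] fockspaceD(1)[OF assms(2)]
    by (intro summable_on_add summable_on_cmult_right)
  ultimately have "(\<lambda>w. (norm (c *s f w + g w))\<^sup>2) summable_on UNIV"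
    by (rule_tac summable_on_comparison_test) auto
  then show ?thesis
    using assms unfolding fockspace_def by auto
qed

lemma fockspace_diff:
  assumes "f \<in> fockspace n" "g \<in> fockspace n"
  shows "(\<lambda>w. f w - g w) \<in> fockspace n"
  using fockspace_lincomb[OF assms(2,1), of "-1"] by simp

lemma fnorm_power2: "(fnorm f)\<^sup>2 = (\<Sum>\<^sub>\<infinity>w. (norm (f w))\<^sup>2)"
  unfolding fnorm_def by (simp add: infsum_nonneg)

lemma fip_abs_summable:
  assumes "f \<in> fockspace n" "g \<in> fockspace n"
  shows "(\<lambda>w. norm (cinner (f w) (g w))) summable_on UNIV"
proof (rule summable_on_comparison_test)
  show "(\<lambda>w. (norm (f w))\<^sup>2 + (norm (g w))\<^sup>2) summable_on UNIV"
    using fockspaceD(1)[OF assms(1)] fockspaceD(1)[OF assms(2)] by (rule summable_on_add)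
  show "norm (cinner (f w) (g w)) \<le> (norm (f w))\<^sup>2 + (norm (g w))\<^sup>2" for w
    using cinner_bound[of "f w" "g w"] norm_ge_zero[of "cinner (f w) (g w)"] by linarith
qed simp

lemma fip_summable:
  assumes "f \<in> fockspace n" "g \<in> fockspace n"
  shows "(\<lambda>w. cinner (f w) (g w)) summable_on UNIV"
  using fip_abs_summable[OF assms] by (rule abs_summable_summable)

lemma fip_lincomb_left:
  assumes "f \<in> fockspace n" "g \<in> fockspace n" "k \<in> fockspace n"
  shows "fip (\<lambda>w. c *s f w + g w) k = c * fip f k + fip g k"
  unfolding fip_def cinner_add_left cinner_scale_left
  using fip_summable[OF assms(1,3)] fip_summable[OF assms(2,3)]
  by (simp add: infsum_add summable_on_cmult_right infsum_cmult_right)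

lemma fip_lincomb_right:
  assumes "f \<in> fockspace n" "g \<in> fockspace n" "k \<in> fockspace n"
  shows "fip k (\<lambda>w. c *s f w + g w) = cnj c * fip k f + fip k g"
  unfolding fip_def cinner_add_right cinner_scale_right
  using fip_summable[OF assms(3,1)] fip_summable[OF assms(3,2)]
  by (simp add: infsum_add summable_on_cmult_right infsum_cmult_right)

lemma fip_emb_left: "fip (emb u) g = cinner u (g [])"
proof -
  have "fip (emb u) g = (\<Sum>\<^sub>\<infinity>w\<in>{[]}. cinner (emb u w) (g w))"
    unfolding fip_def by (rule infsum_cong_neutral) (auto simp: emb_def)
  then show ?thesis
    by (simp add: emb_def)
qed

lemma fip_bound:
  assumes "f \<in> fockspace n" "g \<in> fockspace n"
  shows "2 * cmod (fip f g) \<le> (fnorm f)\<^sup>2 + (fnorm g)\<^sup>2"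
proof -
  have "2 * cmod (fip f g) \<le> 2 * (\<Sum>\<^sub>\<infinity>w. norm (cinner (f w) (g w)))"
    unfolding fip_def using norm_infsum_bound[OF fip_abs_summable[OF assms]] by simp
  also have "\<dots> = (\<Sum>\<^sub>\<infinity>w. 2 * norm (cinner (f w) (g w)))"
    by (simp add: infsum_cmult_right')
  also have "\<dots> \<le> (\<Sum>\<^sub>\<infinity>w. (norm (f w))\<^sup>2 + (norm (g w))\<^sup>2)"
    using assms by (intro infsum_mono summable_on_cmult_right fip_abs_summable summable_on_add
        fockspaceD(1) cinner_bound)
  also have "\<dots> = (fnorm f)\<^sup>2 + (fnorm g)\<^sup>2"
    unfolding fnorm_power2 using assms by (intro infsum_add fockspaceD(1))
  finally show ?thesis .
qed

lemma polys_dense: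
  assumes "q \<in> fockspace n" "q [] = 0" "\<delta> > 0"
  obtains p where "p \<in> polys n" "p [] = 0" "(fnorm (\<lambda>w. q w - p w))\<^sup>2 \<le> \<delta>"
proof -
  define g where "g = (\<lambda>w. (norm (q w))\<^sup>2)"
  have g: "g summable_on UNIV"
    using fockspaceD(1)[OF assms(1)] by (simp add: g_def)
  then obtain F where F: "finite F" "dist (sum g F) (infsum g UNIV) \<le> \<delta>"
    using has_sum_finite_approximation[OF has_sum_infsum[OF g] assms(3)] by auto
  define p where "p w = (if w \<in> F then q w else 0)" for w
  have "(\<lambda>w. (norm (p w))\<^sup>2) summable_on UNIV"
    by (rule summable_on_comparison_test[OF fockspaceD(1)[OF assms(1)]]) (auto simp: p_def)
  then have "p \<in> polys n"
    using fockspaceD(2)[OF assms(1)] F(1)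
    unfolding polys_def fockspace_def p_def by (auto intro: finite_subset[of _ F])
  moreover have "p [] = 0"
    using assms(2) by (simp add: p_def)
  moreover have "(fnorm (\<lambda>w. q w - p w))\<^sup>2 = infsum g (UNIV - F)"
    unfolding fnorm_power2 by (rule infsum_cong_neutral) (auto simp: p_def g_def)
  moreover have "infsum g (UNIV - F) = infsum g UNIV - sum g F"
    using g F(1) by (simp add: infsum_Diff)
  ultimately show ?thesis
    using that F(2) by (simp add: dist_real_def)
qed

lemma fnorm_nonneg: "0 \<le> fnorm f"
  unfolding fnorm_def by (simp add: infsum_nonneg)

lemma fockspace_sum:
  assumes "finite S" "\<And>j. j \<in> S \<Longrightarrow> f j \<in> fockspace n"
  shows "(\<lambda>w. \<Sum>j\<in>S. c j *s f j w) \<in> fockspace n"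
  using assms
proof (induction S rule: finite_induct)
  case (insert a S)
  then show ?case
    using fockspace_lincomb[of "f a" n "\<lambda>w. \<Sum>j\<in>S. c j *s f j w" "c a"] by simp
qed simp

definition fock_linear :: "nat \<Rightarrow> ('m::finite fock \<Rightarrow> 'm fock) \<Rightarrow> bool" where
  "fock_linear n A \<longleftrightarrow> (\<forall>f\<in>fockspace n. A f \<in> fockspace n) \<and>
     (\<forall>f\<in>fockspace n. \<forall>g\<in>fockspace n. \<forall>c.
        A (\<lambda>w. c *s f w + g w) = (\<lambda>w. c *s A f w + A g w))"

lemma bounded_op_imp_fock_linear: "bounded_op n A \<Longrightarrow> fock_linear n A"
  unfolding bounded_op_def fock_linear_def by blast

lemma fock_linear_closed: "fock_linear n A \<Longrightarrow> f \<in> fockspace n \<Longrightarrow> A f \<in> fockspace n"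
  unfolding fock_linear_def by blast

lemma fock_linear_lincomb:
  "fock_linear n A \<Longrightarrow> f \<in> fockspace n \<Longrightarrow> g \<in> fockspace n \<Longrightarrow>
    A (\<lambda>w. c *s f w + g w) = (\<lambda>w. c *s A f w + A g w)"
  unfolding fock_linear_def by blast

lemma fock_linear_zero:
  assumes "fock_linear n A"
  shows "A (\<lambda>w. 0) = (\<lambda>w. 0)"
proof -
  have "A (\<lambda>w. 0) = (\<lambda>w. A (\<lambda>w. 0) w + A (\<lambda>w. 0) w)"
    using fock_linear_lincomb[OF assms zero_in_fockspace zero_in_fockspace, of 1] by simp
  then show ?thesis
    by (simp add: fun_eq_iff)
qed

lemma fock_linear_sum:
  assumes "fock_linear n A" "finite S" "\<And>j. j \<in> S \<Longrightarrow> f j \<in> fockspace n"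
  shows "A (\<lambda>w. \<Sum>j\<in>S. c j *s f j w) = (\<lambda>w. \<Sum>j\<in>S. c j *s A (f j) w)"
  using assms(2,3)
proof (induction S rule: finite_induct)
  case empty
  then show ?case using fock_linear_zero[OF assms(1)] by simp
next
  case (insert a S)
  then show ?case
    using fock_linear_lincomb[OF assms(1), of "f a" "\<lambda>w. \<Sum>j\<in>S. c j *s f j w" "c a"]
      fockspace_sum[of S f n c] by simp
qed

lemma compress_mult_vec:
  assumes "fock_linear n A"
  shows "compress A *v u = A (emb u) []"
proof -
  have "emb u = (\<lambda>w. \<Sum>j\<in>UNIV. u $ j *s emb (axis j 1) w)"
    by (auto simp: emb_def fun_eq_iff basis_expansion)
  then have "A (emb u) = (\<lambda>w. \<Sum>j\<in>UNIV. u $ j *s A (emb (axis j 1)) w)"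
    using fock_linear_sum[OF assms, of UNIV "\<lambda>j. emb (axis j 1)" "\<lambda>j. u $ j"] by simp
  then show ?thesis
    by (simp add: compress_def vec_eq_iff matrix_vector_mult_def sum_component mult.commute)
qed

lemma fip_quadratic_expand:
  assumes "fock_linear n T" "f \<in> fockspace n" "g \<in> fockspace n"
  shows "fip (T (\<lambda>w. c *s f w + g w)) (\<lambda>w. c *s f w + g w)
     = c * cnj c * fip (T f) f + c * fip (T f) g + cnj c * fip (T g) f + fip (T g) g"
proof -
  have "T f \<in> fockspace n" "T g \<in> fockspace n"
    using assms fock_linear_closed by blast+
  then show ?thesis
    unfolding fock_linear_lincomb[OF assms]
    using fip_lincomb_left[OF \<open>T f \<in> _\<close> \<open>T g \<in> _\<close> fockspace_lincomb[OF assms(2,3)]]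
      fip_lincomb_right[OF assms(2,3) \<open>T f \<in> _\<close>] fip_lincomb_right[OF assms(2,3) \<open>T g \<in> _\<close>]
    by (simp add: algebra_simps)
qed

lemma real_form_hermitian:
  assumes "fock_linear n T" "\<And>f. f \<in> fockspace n \<Longrightarrow> fip (T f) f \<in> \<real>"
    and "f \<in> fockspace n" "g \<in> fockspace n"
  shows "fip (T g) f = cnj (fip (T f) g)"
proof -
  define a where "a = fip (T f) g"
  define b where "b = fip (T g) f"
  have Im0: "Im (fip (T h) h) = 0" if "h \<in> fockspace n" for h
    using assms(2)[OF that] complex_is_Real_iff by blast
  have "Im a + Im b = 0"
    using fip_quadratic_expand[OF assms(1,3,4), of 1] Im0[OF fockspace_lincomb[OF assms(3,4), of 1]]
      Im0[OF assms(3)] Im0[OF assms(4)]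
    by (simp add: a_def b_def)
  moreover have "Re a - Re b = 0"
    using fip_quadratic_expand[OF assms(1,3,4), of \<i>] Im0[OF fockspace_lincomb[OF assms(3,4), of \<i>]]
      Im0[OF assms(3)] Im0[OF assms(4)]
    by (simp add: a_def b_def)
  ultimately show ?thesis
    by (simp add: a_def [symmetric] b_def [symmetric] complex_eq_iff)
qed

lemma bounded_op_form_bound:
  assumes "bounded_op n T"
  obtains C :: real where "C > 0" "\<And>r. r \<in> fockspace n \<Longrightarrow> Re (fip (T r) r) \<le> C * (fnorm r)\<^sup>2"
proof -
  obtain C0 where C0: "\<And>f. f \<in> fockspace n \<Longrightarrow> fnorm (T f) \<le> C0 * fnorm f"
    using assms unfolding bounded_op_def by blast
  have "Re (fip (T r) r) \<le> (C0\<^sup>2 + 1) * (fnorm r)\<^sup>2" if r: "r \<in> fockspace n" for r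
  proof -
    have Tr: "T r \<in> fockspace n"
      using assms r unfolding bounded_op_def by blast
    have "(fnorm (T r))\<^sup>2 \<le> C0\<^sup>2 * (fnorm r)\<^sup>2"
      using power_mono[OF C0[OF r] fnorm_nonneg] by (simp add: power_mult_distrib)
    moreover have "Re (fip (T r) r) \<le> cmod (fip (T r) r)"
      by (rule complex_Re_le_cmod)
    moreover have "2 * cmod (fip (T r) r) \<le> (fnorm (T r))\<^sup>2 + (fnorm r)\<^sup>2"
      by (rule fip_bound[OF Tr r])
    moreover have "0 \<le> C0\<^sup>2 * (fnorm r)\<^sup>2" "0 \<le> (fnorm r)\<^sup>2"
      by simp_all
    ultimately have "Re (fip (T r) r) \<le> C0\<^sup>2 * (fnorm r)\<^sup>2 + (fnorm r)\<^sup>2"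
      by linarith
    then show ?thesis
      by (simp add: algebra_simps)
  qed
  moreover have "0 < C0\<^sup>2 + 1"
    using zero_le_power2[of C0] by linarith
  ultimately show ?thesis
    using that by blast
qed

lemma cInf_eq_approx:
  fixes S :: "real set"
  assumes "\<And>s. s \<in> S \<Longrightarrow> a \<le> s" "\<And>e. e > 0 \<Longrightarrow> \<exists>s\<in>S. s < a + e"
  shows "Inf S = a"
proof (rule cInf_eq)
  show "y \<le> a" if lower: "\<And>s. s \<in> S \<Longrightarrow> y \<le> s" for y
  proof (rule ccontr)
    assume "\<not> y \<le> a"
    then obtain s where "s \<in> S" "s < y"
      using assms(2)[of "y - a"] by auto
    then show False
      using lower by fastforce
  qed
qed (rule assms(1))

lemma quadratic_nonneg_imp_linear_coeff_zero:
  fixes a b :: real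
  assumes "\<And>t. 0 \<le> t\<^sup>2 * a + t * b"
  shows "b = 0"
proof (rule ccontr)
  assume "b \<noteq> 0"
  define d where "d = \<bar>a\<bar> + 1"
  have "d > 0" "d - a > 0"
    unfolding d_def by linarith+
  define t where "t = - b / d"
  have "t\<^sup>2 * a + t * b = - b\<^sup>2 * (d - a) / d\<^sup>2"
    unfolding t_def using \<open>d > 0\<close> by (simp add: field_simps power2_eq_square)
  also have "\<dots> < 0"
    using \<open>b \<noteq> 0\<close> \<open>d > 0\<close> \<open>d - a > 0\<close> by (intro divide_neg_pos mult_neg_pos) auto
  finally show False
    using assms[of t] by simp
qed

locale positive_invertible_op =
  fixes n :: nat and T Tinv :: "'m::finite fock \<Rightarrow> 'm fock"
  assumes positive: "positive_op n T"
    and Tinv_closed: "f \<in> fockspace n \<Longrightarrow> Tinv f \<in> fockspace n"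
    and T_Tinv: "f \<in> fockspace n \<Longrightarrow> T (Tinv f) = f"
    and Tinv_T: "f \<in> fockspace n \<Longrightarrow> Tinv (T f) = f"
begin

lemma T_bounded: "bounded_op n T"
  using positive unfolding positive_op_def by blast

lemma T_linear: "fock_linear n T"
  using T_bounded by (rule bounded_op_imp_fock_linear)

lemma form_real: "f \<in> fockspace n \<Longrightarrow> fip (T f) f \<in> \<real>"
  using positive unfolding positive_op_def by blast

lemma form_nonneg: "f \<in> fockspace n \<Longrightarrow> 0 \<le> Re (fip (T f) f)"
  using positive unfolding positive_op_def by blast

lemma T_hermitian: "f \<in> fockspace n \<Longrightarrow> g \<in> fockspace n \<Longrightarrow> fip (T g) f = cnj (fip (T f) g)"
  using real_form_hermitian[OF T_linear form_real] .

lemma Tinv_linear: "fock_linear n Tinv"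
  unfolding fock_linear_def
proof (intro conjI ballI allI)
  show "Tinv f \<in> fockspace n" if "f \<in> fockspace n" for f :: "'m fock"
    using that by (rule Tinv_closed)
next
  fix f g :: "'m fock" and c :: complex
  assume f: "f \<in> fockspace n" and g: "g \<in> fockspace n"
  have "T (\<lambda>w. c *s Tinv f w + Tinv g w) = (\<lambda>w. c *s f w + g w)"
    using fock_linear_lincomb[OF T_linear Tinv_closed[OF f] Tinv_closed[OF g]] f g
    by (simp add: T_Tinv)
  then show "Tinv (\<lambda>w. c *s f w + g w) = (\<lambda>w. c *s Tinv f w + Tinv g w)"
    using Tinv_T[OF fockspace_lincomb[OF Tinv_closed[OF f] Tinv_closed[OF g], where c = c]] by simp
qed

lemma fip_T_Tinv_emb: "fip (T (Tinv (emb u))) g = cinner u (g [])"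
  by (simp add: T_Tinv fip_emb_left)

lemma compress_Tinv_mult_vec: "compress Tinv *v u = Tinv (emb u) []"
  using Tinv_linear by (rule compress_mult_vec)

text \<open>If \<open>Tinv (emb u)\<close> vanishes at the empty word, the form of \<open>T\<close> along the line
  \<open>t emb u + Tinv (emb u)\<close> is \<open>a t\<^sup>2 + 2 t \<parallel>u\<parallel>\<^sup>2\<close>, which is negative for small \<open>t < 0\<close>
  unless \<open>u = 0\<close>.\<close>

lemma compress_Tinv_injective:
  assumes "compress Tinv *v u = 0"
  shows "u = 0"
proof -
  define h where "h = Tinv (emb u)"
  define s where "s = (norm u)\<^sup>2"
  have h: "h \<in> fockspace n" "h [] = 0"
    using Tinv_closed assms by (simp_all add: h_def compress_Tinv_mult_vec)
  have Th_emb: "fip (T h) (emb u) = of_real s"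
    unfolding h_def fip_T_Tinv_emb by (simp add: emb_def s_def cinner_self)
  have "0 \<le> t\<^sup>2 * Re (fip (T (emb u)) (emb u)) + t * (2 * s)" for t :: real
  proof -
    have "0 \<le> Re (fip (T (\<lambda>w. of_real t *s emb u w + h w)) (\<lambda>w. of_real t *s emb u w + h w))"
      using form_nonneg fockspace_lincomb[OF emb_in_fockspace h(1)] by blast
    also have "\<dots> = t\<^sup>2 * Re (fip (T (emb u)) (emb u)) + t * (2 * s)"
      unfolding fip_quadratic_expand[OF T_linear emb_in_fockspace h(1)]
        T_hermitian[OF h(1) emb_in_fockspace] Th_emb
      using h(2) by (simp add: h_def fip_T_Tinv_emb power2_eq_square algebra_simps)
    finally show ?thesis .
  qed
  then have "2 * s = 0"
    by (rule quadratic_nonneg_imp_linear_coeff_zero)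
  then show ?thesis
    by (simp add: s_def)
qed

lemma compress_Tinv_hermitian: "compress Tinv $ i $ j = cnj (compress Tinv $ j $ i)"
proof -
  define gi where "gi = Tinv (emb (axis i 1))"
  define gj where "gj = Tinv (emb (axis j 1))"
  have "gi \<in> fockspace n" "gj \<in> fockspace n"
    unfolding gi_def gj_def by (simp_all add: Tinv_closed)
  then have "fip (T gj) gi = cnj (fip (T gi) gj)"
    by (rule T_hermitian)
  then show ?thesis
    by (simp add: gi_def gj_def fip_T_Tinv_emb cinner_axis_left compress_def)
qed

text \<open>The cross terms vanish because \<open>T (Tinv (emb u)) = emb u\<close> is supported at the
  empty word, where \<open>r\<close> vanishes.\<close>

lemma form_orthogonal_split:
  assumes "r \<in> fockspace n" "r [] = 0"
  shows "fip (T (\<lambda>w. r w + Tinv (emb u) w)) (\<lambda>w. r w + Tinv (emb u) w)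
    = fip (T r) r + cinner u (Tinv (emb u) [])"
proof -
  define h where "h = Tinv (emb u)"
  have h: "h \<in> fockspace n"
    by (simp add: h_def Tinv_closed)
  have "fip (T h) r = 0"
    using assms(2) by (simp add: h_def fip_T_Tinv_emb)
  moreover from this have "fip (T r) h = 0"
    using T_hermitian[OF h assms(1)] by simp
  ultimately show ?thesis
    using fip_quadratic_expand[OF T_linear assms(1) h, of 1]
    by (simp add: h_def fip_T_Tinv_emb)
qed

context
  fixes B :: "complex^'m^'m"
  assumes compress_Tinv_B: "compress Tinv ** B = mat 1"
begin

lemma Tinv_emb_B_Nil: "Tinv (emb (B *v x)) [] = x"
  using compress_Tinv_mult_vec[of "B *v x"]
  by (simp add: matrix_vector_mul_assoc compress_Tinv_B)

lemma cinner_B_eq_form: "cinner (B *v x) x = fip (T (Tinv (emb (B *v x)))) (Tinv (emb (B *v x)))"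
  by (simp add: fip_T_Tinv_emb Tinv_emb_B_Nil)

lemma form_emb_minus_poly:
  fixes x :: "complex^'m" and p :: "'m fock"
  assumes "p \<in> polys n" "p [] = 0"
  defines "r \<equiv> \<lambda>w. (emb x w - Tinv (emb (B *v x)) w) - p w"
  shows "r \<in> fockspace n"
    and "fip (T (\<lambda>w. emb x w - p w)) (\<lambda>w. emb x w - p w) = fip (T r) r + cinner (B *v x) x"
proof -
  show r: "r \<in> fockspace n"
    using assms(1) unfolding r_def polys_def by (simp add: fockspace_diff Tinv_closed)
  have "(\<lambda>w. emb x w - p w) = (\<lambda>w. r w + Tinv (emb (B *v x)) w)"
    by (auto simp: r_def)
  moreover have "r [] = 0"
    using assms(2) Tinv_emb_B_Nil[of x] by (simp add: r_def emb_def)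
  ultimately show "fip (T (\<lambda>w. emb x w - p w)) (\<lambda>w. emb x w - p w) = fip (T r) r + cinner (B *v x) x"
    using form_orthogonal_split[OF r] by (simp add: Tinv_emb_B_Nil)
qed

lemma pred_form_eq_B: "pred_form n T x = Re (cinner (B *v x) x)"
proof -
  define h where "h = Tinv (emb (B *v x))"
  define Q where "Q f = Re (fip (T f) f)" for f
  define S where "S = {Q (\<lambda>w. emb x w - p w) | p. p \<in> polys n \<and> p [] = 0}"
  have split: "Q (\<lambda>w. emb x w - p w) = Q (\<lambda>w. (emb x w - h w) - p w) + Re (cinner (B *v x) x)"
    if "p \<in> polys n" "p [] = 0" for p
    using form_emb_minus_poly[OF that] by (simp add: Q_def h_def)
  have "Inf S = Re (cinner (B *v x) x)"
  proof (rule cInf_eq_approx)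
    show "Re (cinner (B *v x) x) \<le> s" if "s \<in> S" for s
    proof -
      obtain p where p: "p \<in> polys n" "p [] = 0" and s: "s = Q (\<lambda>w. emb x w - p w)"
        using \<open>s \<in> S\<close> unfolding S_def by blast
      show ?thesis
        using split[OF p] form_nonneg[OF form_emb_minus_poly(1)[OF p]]
        unfolding s Q_def h_def by simp
    qed
    show "\<exists>s\<in>S. s < Re (cinner (B *v x) x) + e" if "e > 0" for e
    proof -
      obtain C where C: "C > 0" "\<And>r. r \<in> fockspace n \<Longrightarrow> Q r \<le> C * (fnorm r)\<^sup>2"
        using bounded_op_form_bound[OF T_bounded] unfolding Q_def by blast
      have "(\<lambda>w. emb x w - h w) \<in> fockspace n"
        by (simp add: fockspace_diff Tinv_closed h_def)
      moreover have "emb x [] - h [] = 0"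
        using Tinv_emb_B_Nil[of x] by (simp add: emb_def h_def)
      moreover have "0 < e / (2 * C)"
        using \<open>e > 0\<close> C(1) by simp
      ultimately obtain p where p: "p \<in> polys n" "p [] = 0"
        and small: "(fnorm (\<lambda>w. (emb x w - h w) - p w))\<^sup>2 \<le> e / (2 * C)"
        using polys_dense by blast
      have "Q (\<lambda>w. (emb x w - h w) - p w) \<le> C * (e / (2 * C))"
        using order_trans[OF C(2) mult_left_mono[OF small]] form_emb_minus_poly(1)[OF p] C(1)
        by (simp add: h_def)
      then have "Q (\<lambda>w. emb x w - p w) < Re (cinner (B *v x) x) + e"
        using split[OF p] C(1) \<open>e > 0\<close> by simp
      moreover have "Q (\<lambda>w. emb x w - p w) \<in> S"
        unfolding S_def using p by blast
      ultimately show ?thesis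
        by blast
    qed
  qed
  then show ?thesis
    unfolding pred_form_def S_def Q_def .
qed

lemma Delta_eq_B: "Delta n T = B"
proof -
  have B: "cinner (B *v x) x = of_real (pred_form n T x)" for x
  proof -
    have "cinner (B *v x) x \<in> \<real>"
      unfolding cinner_B_eq_form by (simp add: form_real Tinv_closed)
    then show ?thesis
      by (simp add: pred_form_eq_B)
  qed
  moreover have "D = B" if "\<forall>x. cinner (D *v x) x = of_real (pred_form n T x)" for D
  proof -
    have "cinner ((D - B) *v x) x = 0" for x
      using that B by (simp add: matrix_vector_mult_diff_rdistrib cinner_diff_left)
    then show ?thesis
      using quadratic_form_zero_imp_matrix_zero[of "D - B"] by simp
  qed
  ultimately show ?thesis
    unfolding Delta_def by (intro the_equality) auto
qed

end

lemma pred_entropy_eq: "pred_entropy n T = - ln (Re (det (compress Tinv)))"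
proof -
  obtain B where BK: "B ** compress Tinv = mat 1"
    using compress_Tinv_injective matrix_left_invertible_ker by blast
  then have KB: "compress Tinv ** B = mat 1"
    using matrix_left_right_inverse by blast
  have "det B * det (compress Tinv) = 1"
    using BK by (metis det_mul det_I)
  moreover obtain r where r: "det (compress Tinv) = of_real r"
    using det_hermitian_real[OF compress_Tinv_hermitian] Reals_cases by metis
  ultimately have det_B: "det B = of_real (inverse r)"
    by (metis inverse_unique mult.commute of_real_inverse)
  show ?thesis
    unfolding pred_entropy_def Delta_eq_B[OF KB] det_B r Re_complex_of_real by (rule ln_inverse)
qed

end

theorem mainTheorem5:
  fixes n :: nat and T Tinv :: "'m::finite fock \<Rightarrow> 'm fock"
  assumes "multi_toeplitz n T"
    and "positive_op n T"
    and "\<forall>f\<in>fockspace n. Tinv f \<in> fockspace n"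
    and "\<forall>f\<in>fockspace n. T (Tinv f) = f"
    and "\<forall>f\<in>fockspace n. Tinv (T f) = f"
  shows "pred_entropy n T = - ln (Re (det (compress Tinv)))"
proof -
  interpret positive_invertible_op n T Tinv
    using assms(2-5) by unfold_locales auto
  show ?thesis
    by (rule pred_entropy_eq)
qed

end
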